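(* Let $n\ge 1$ be a fixed integer, let $\phi\in(0,1)$, and let $m\ge 1$. Consider a sliding window consisting of $n$ sub-windows, the $i$-th sub-window containing the data points $x_{i,1},\dots,x_{i,m}$, so that the window contains the $nm$ data points $x=\{x_{i,j}: 1\le i\le n,\ 1\le j\le m\}$. Suppose the $x_{i,j}$ are independent and identically distributed with a continuous distribution having probability density $f$, and let $p_\phi$ be the $\phi$-quantile of this distribution, with $f(p_\phi)>0$. Let $y_i$ be the sample $\phi$-quantile of the $i$-th sub-window $\{x_{i,1},\dots,x_{i,m}\}$, let $y_a=\frac1n\sum_{i=1}^n y_i$, and let $y_e$ be the sample $\phi$-quantile of the whole window $x$. Then for every $\alpha\in(0,1)$, asymptotically as $m\to\infty$ (with $n$ fixed), with probability at least $1-\alpha$, \[ |y_a-y_e|\le \frac{2\,\Phi^{-1}(\alpha/2)\sqrt{\phi(1-\phi)}}{\sqrt{nm}\,f(p_\phi)}, \] i.e. $\liminf_{m\to\infty}\Pr\!\left(|y_a-y_e|\le \frac{2\Phi^{-1}(\alpha/2)\sqrt{\phi(1-\phi)}}{\sqrt{nm}\,f(p_\phi)}\right)\ge 1-\alpha$. In particular, for $\alpha=5\%$, asymptotically as $m\to\infty$, with probability at least $95\%$, \[ |y_a-y_e|\le \frac{2\times 1.96\sqrt{\phi(1-\phi)}}{\sqrt{nm}\,f(p_\phi)}. \]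
   Context: For a finite collection of $N$ values sorted increasingly as $e_1\le\dots\le e_N$, the sample $\phi$-quantile ($0<\phi\le 1$) is $e_{\lceil \phi N\rceil}$. Here $\Phi^{-1}(\beta)$ denotes the upper $\beta$-quantile of the standard normal distribution, i.e. the value $z$ with $\Pr(Z>z)=\beta$ for $Z\sim\mathcal N(0,1)$, where $\Phi$ is the cumulative distribution function of the standard normal distribution (so $\Phi^{-1}(0.025)=1.96$). *)

theory Defs
  imports "HOL-Probability.Probability"
begin

text \<open>Sample phi-quantile of a finite collection given as a list (order irrelevant):
  the element e_(ceil(phi N)) of the increasingly sorted values (1-based).\<close>
definition sample_quantile :: "real \<Rightarrow> real list \<Rightarrow> real" where
  "sample_quantile \<phi> xs = sort xs ! (nat \<lceil>\<phi> * real (length xs)\<rceil> - 1)"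

definition std_normal_upper_quantile :: "real \<Rightarrow> real" where
  "std_normal_upper_quantile \<beta> =
     (THE z. measure (density lborel (\<lambda>x. ennreal (std_normal_density x))) {z<..} = \<beta>)"

end

theory Submission
  imports Defs
begin

text \<open>
  Let \<open>q\<^sub>N\<close> be the sample \<open>\<phi>\<close>-quantile of \<open>N\<close> pairwise independent observations with
  distribution function \<open>F\<close>, where \<open>F p = \<phi>\<close> and \<open>F' p = f p > 0\<close>, and let \<open>F\<^sub>N\<close> be their
  empirical distribution function. By the Bahadur representation,
  \<open>sqrt N (q\<^sub>N - p) = sqrt N (\<phi> - F\<^sub>N p) / f p + o\<^sub>P(1)\<close>. The linear term is additive over the
  data: the count of the whole window is the sum of the counts of its sub-windows, so it cancels in
  \<open>y\<^sub>a - y\<^sub>e\<close> and leaves \<open>sqrt m (y\<^sub>a - y\<^sub>e) = o\<^sub>P(1)\<close>. Hence the probability in the theorem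
  tends to 1, and the only property of the normal quantile that matters is its positivity.

  The representation is proved as in Ghosh (1971): Chebyshev's inequality for the empirical counts
  at \<open>p + t / sqrt N\<close> shows that the scaled quantile error and the linear term rarely lie on
  opposite sides of a level \<open>t\<close> with a gap, and tightness of the linear term reduces the claim to
  finitely many levels.
\<close>

section \<open>Sample quantiles and empirical counts\<close>

lemma sorted_nth_le_iff_less_length_filter:
  fixes xs :: "'a::linorder list"
  assumes "sorted xs" "k < length xs"
  shows "xs ! k \<le> t \<longleftrightarrow> k < length (filter (\<lambda>x. x \<le> t) xs)"
  using assms
proof (induction xs arbitrary: k)
  case (Cons x xs)
  show ?case
  proof (cases "x \<le> t")
    case True
    then show ?thesis using Cons by (cases k) auto
  next
    case False
    then have "filter (\<lambda>x. x \<le> t) (x # xs) = []"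
      using Cons.prems(1) by (auto simp: filter_empty_conv)
    moreover have "x \<le> (x # xs) ! k"
      using Cons.prems by (auto simp: nth_Cons split: nat.split)
    ultimately show ?thesis using False by auto
  qed
qed simp

definition count_le :: "real \<Rightarrow> real list \<Rightarrow> nat" where
  "count_le t xs = length (filter (\<lambda>x. x \<le> t) xs)"

lemma count_le_concat: "count_le t (concat xss) = (\<Sum>xs\<leftarrow>xss. count_le t xs)"
  by (induction xss) (simp_all add: count_le_def)

lemma count_le_map_upt: "real (count_le t (map g [0..<N])) = (\<Sum>j<N. of_bool (g j \<le> t))"
  by (induction N) (simp_all add: count_le_def)

lemma measurable_count_le [measurable]:
  assumes [measurable]: "\<And>j. j < N \<Longrightarrow> Y j \<in> borel_measurable M"
  shows "(\<lambda>\<omega>. real (count_le t (map (\<lambda>j. Y j \<omega>) [0..<N]))) \<in> borel_measurable M"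
  unfolding count_le_map_upt by measurable

lemma sample_quantile_le_iff:
  assumes "0 < \<phi>" "\<phi> \<le> 1" "xs \<noteq> []"
  shows "sample_quantile \<phi> xs \<le> t \<longleftrightarrow> \<phi> * length xs \<le> count_le t xs"
proof -
  let ?k = "nat \<lceil>\<phi> * length xs\<rceil>"
  have "0 < \<phi> * length xs" "\<phi> * length xs \<le> length xs"
    using assms by (simp_all add: mult_le_cancel_right1)
  then have k: "1 \<le> ?k" "?k \<le> length xs" by linarith+
  then have "?k - 1 < length (sort xs)" by (simp only: length_sort)
  then have "sample_quantile \<phi> xs \<le> t \<longleftrightarrow> ?k - 1 < count_le t (sort xs)"
    unfolding sample_quantile_def count_le_def by (rule sorted_nth_le_iff_less_length_filter[OF sorted_sort])
  also have "count_le t (sort xs) = count_le t xs"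
    unfolding count_le_def by (metis mset_filter mset_sort size_mset)
  finally have "sample_quantile \<phi> xs \<le> t \<longleftrightarrow> ?k \<le> count_le t xs" using k(1) by linarith
  then show ?thesis by simp
qed

lemma measurable_sample_quantile:
  assumes "0 < \<phi>" "\<phi> \<le> 1" and [measurable]: "\<And>j. j < N \<Longrightarrow> Y j \<in> borel_measurable M"
  shows "(\<lambda>\<omega>. sample_quantile \<phi> (map (\<lambda>j. Y j \<omega>) [0..<N])) \<in> borel_measurable M"
proof (cases "N = 0")
  case False
  show ?thesis unfolding borel_measurable_iff_le
  proof
    fix t
    have "{\<omega>\<in>space M. sample_quantile \<phi> (map (\<lambda>j. Y j \<omega>) [0..<N]) \<le> t}
        = {\<omega>\<in>space M. \<phi> * N \<le> real (count_le t (map (\<lambda>j. Y j \<omega>) [0..<N]))}"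
      using sample_quantile_le_iff[OF assms(1,2)] False by auto
    also have "\<dots> \<in> sets M" by measurable
    finally show "{\<omega>\<in>space M. sample_quantile \<phi> (map (\<lambda>j. Y j \<omega>) [0..<N]) \<le> t} \<in> sets M" .
  qed
qed simp

text \<open>\<open>sqrt N\<close> times the error of the Bahadur representation \<open>p + (\<phi> - F\<^sub>N p) / d\<close> of the
  sample quantile, where \<open>N = length xs\<close> and \<open>F\<^sub>N p = count_le p xs / N\<close>.\<close>

definition bahadur_remainder :: "real \<Rightarrow> real \<Rightarrow> real \<Rightarrow> real list \<Rightarrow> real" where
  "bahadur_remainder \<phi> p d xs =
     sqrt (length xs) * (sample_quantile \<phi> xs - p)
     + (real (count_le p xs) - real (length xs) * \<phi>) / (sqrt (length xs) * d)"

lemma measurable_bahadur_remainder: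
  assumes "0 < \<phi>" "\<phi> \<le> 1" and "\<And>j. j < N \<Longrightarrow> Y j \<in> borel_measurable M"
  shows "(\<lambda>\<omega>. bahadur_remainder \<phi> p d (map (\<lambda>j. Y j \<omega>) [0..<N])) \<in> borel_measurable M"
proof -
  note [measurable] = measurable_sample_quantile[OF assms] measurable_count_le[OF assms(3)]
  show ?thesis unfolding bahadur_remainder_def by simp
qed

text \<open>The linear terms cancel because the count of the whole window is the sum of the counts of
  the sub-windows.\<close>

lemma mean_sample_quantile_diff_eq:
  fixes xs :: "nat \<Rightarrow> real list"
  assumes "n \<ge> 1" and "d > 0" and "m > 0" and len: "\<And>i. i < n \<Longrightarrow> length (xs i) = m"
  shows "sqrt m * ((\<Sum>i<n. sample_quantile \<phi> (xs i)) / n - sample_quantile \<phi> (concat (map xs [0..<n])))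
    = (\<Sum>i<n. bahadur_remainder \<phi> p d (xs i)) / n
      - bahadur_remainder \<phi> p d (concat (map xs [0..<n])) / sqrt n"
proof -
  define s where "s = sqrt m"
  define r where "r = sqrt n"
  define Q where "Q i = sample_quantile \<phi> (xs i)" for i
  define Qe where "Qe = sample_quantile \<phi> (concat (map xs [0..<n]))"
  define R where "R i = bahadur_remainder \<phi> p d (xs i)" for i
  define Re where "Re = bahadur_remainder \<phi> p d (concat (map xs [0..<n]))"
  define C where "C = (\<Sum>i<n. real (count_le p (xs i))) - n * m * \<phi>"
  have s: "s > 0" using \<open>m > 0\<close> by (simp add: s_def)
  have r: "r > 0" "r * r = n" using \<open>n \<ge> 1\<close> by (simp_all add: r_def)
  have "(\<Sum>i<n. R i) = s * (\<Sum>i<n. Q i - p) + C / (s * d)"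
    using len by (simp add: R_def Q_def C_def s_def bahadur_remainder_def sum.distrib
        sum_distrib_left sum_subtractf sum_divide_distrib[symmetric] algebra_simps)
  then have mean: "s * ((\<Sum>i<n. Q i) / n - p) = (\<Sum>i<n. R i) / n - C / (n * s * d)"
    using \<open>n \<ge> 1\<close> by (simp add: sum_subtractf field_simps)
  have "length (concat (map xs [0..<n])) = n * m"
    using len by (simp add: length_concat sum_list_sum_nth)
  moreover have "real (count_le p (concat (map xs [0..<n]))) = (\<Sum>i<n. real (count_le p (xs i)))"
    by (simp add: count_le_concat sum_list_sum_nth atLeast0LessThan)
  ultimately have "Re = r * s * (Qe - p) + C / (r * s * d)"
    by (simp add: Re_def Qe_def C_def bahadur_remainder_def r_def s_def real_sqrt_mult)
  then have "Re / r = s * (Qe - p) + C / (r * r * s * d)"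
    using r(1) s \<open>d > 0\<close> by (simp add: field_simps)
  then have "s * (Qe - p) = Re / r - C / (n * s * d)"
    using r(2) by simp
  with mean show ?thesis
    by (simp add: Q_def Qe_def R_def Re_def algebra_simps flip: s_def r_def)
qed

lemma mean_sample_quantile_diff_le:
  fixes xs :: "nat \<Rightarrow> real list"
  assumes "n \<ge> 1" and "d > 0" and "m > 0" and len: "\<And>i. i < n \<Longrightarrow> length (xs i) = m"
    and rem: "\<And>i. i < n \<Longrightarrow> \<bar>bahadur_remainder \<phi> p d (xs i)\<bar> \<le> \<epsilon>"
    and rem_concat: "\<bar>bahadur_remainder \<phi> p d (concat (map xs [0..<n]))\<bar> \<le> \<epsilon>"
  shows "\<bar>(\<Sum>i<n. sample_quantile \<phi> (xs i)) / n - sample_quantile \<phi> (concat (map xs [0..<n]))\<bar>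
         \<le> 2 * \<epsilon> / sqrt m"
proof -
  let ?R = "\<lambda>i. bahadur_remainder \<phi> p d (xs i)"
  let ?Re = "bahadur_remainder \<phi> p d (concat (map xs [0..<n]))"
  have "\<bar>\<Sum>i<n. ?R i\<bar> \<le> (\<Sum>i<n. \<bar>?R i\<bar>)" by (rule sum_abs)
  also have "\<dots> \<le> n * \<epsilon>" using sum_mono[of "{..<n}" "\<lambda>i. \<bar>?R i\<bar>" "\<lambda>_. \<epsilon>"] rem by simp
  finally have "\<bar>(\<Sum>i<n. ?R i) / n\<bar> \<le> \<epsilon>"
    using \<open>n \<ge> 1\<close> by (simp add: abs_div pos_divide_le_eq mult.commute)
  moreover have "0 \<le> \<epsilon>"
    using order_trans[OF abs_ge_zero rem_concat] .
  then have "\<epsilon> \<le> \<epsilon> * sqrt n"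
    using \<open>n \<ge> 1\<close> by (simp add: mult_le_cancel_left1)
  then have "\<bar>?Re\<bar> \<le> \<epsilon> * sqrt n"
    using rem_concat by linarith
  then have "\<bar>?Re / sqrt n\<bar> \<le> \<epsilon>"
    using \<open>n \<ge> 1\<close> by (simp add: abs_div pos_divide_le_eq)
  moreover have "sqrt m * ((\<Sum>i<n. sample_quantile \<phi> (xs i)) / n
      - sample_quantile \<phi> (concat (map xs [0..<n]))) = (\<Sum>i<n. ?R i) / n - ?Re / sqrt n"
    by (rule mean_sample_quantile_diff_eq[OF assms(1-4)])
  ultimately have "\<bar>sqrt m * ((\<Sum>i<n. sample_quantile \<phi> (xs i)) / n
      - sample_quantile \<phi> (concat (map xs [0..<n])))\<bar> \<le> 2 * \<epsilon>"
    using abs_triangle_ineq4[of "(\<Sum>i<n. ?R i) / n" "?Re / sqrt n"] by simp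
  then show ?thesis
    using \<open>m > 0\<close> by (simp add: abs_mult pos_le_divide_eq mult.commute)
qed

section \<open>Convergence in probability\<close>

lemma (in prob_space) prob_tendsto_0_subset:
  assumes "eventually (\<lambda>m. A m \<subseteq> B m) F" "\<And>m. B m \<in> events" "((\<lambda>m. prob (B m)) \<longlongrightarrow> 0) F"
  shows "((\<lambda>m. prob (A m)) \<longlongrightarrow> 0) F"
  by (rule tendsto_sandwich[OF _ _ tendsto_const assms(3)])
    (use assms(1,2) in \<open>auto elim!: eventually_mono intro: finite_measure_mono\<close>)

lemma (in prob_space) prob_tendsto_1_if_compl_covered:
  assumes "finite I" and "\<And>m. S m \<in> events" and "\<And>k m. B k m \<in> events"
    and "\<And>k. k \<in> I \<Longrightarrow> (\<lambda>m. prob (B k m)) \<longlonglongrightarrow> 0"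
    and "eventually (\<lambda>m. space M - S m \<subseteq> (\<Union>k\<in>I. B k m)) sequentially"
  shows "(\<lambda>m. prob (S m)) \<longlonglongrightarrow> 1"
proof -
  have bound: "eventually (\<lambda>m. prob (space M - S m) \<le> (\<Sum>k\<in>I. prob (B k m))) sequentially"
    using assms(5)
  proof eventually_elim
    case (elim m)
    have "prob (space M - S m) \<le> prob (\<Union>k\<in>I. B k m)"
      using elim assms(1,3) by (intro finite_measure_mono) auto
    also have "\<dots> \<le> (\<Sum>k\<in>I. prob (B k m))"
      using assms(1,3) by (intro finite_measure_subadditive_finite) auto
    finally show ?case .
  qed
  have sum: "(\<lambda>m. \<Sum>k\<in>I. prob (B k m)) \<longlonglongrightarrow> 0"
    using assms(4) by (rule tendsto_null_sum)
  have "(\<lambda>m. prob (space M - S m)) \<longlonglongrightarrow> 0"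
    by (rule tendsto_sandwich[OF _ bound tendsto_const sum]) simp
  then have "(\<lambda>m. 1 - prob (space M - S m)) \<longlonglongrightarrow> 1 - 0"
    by (intro tendsto_diff tendsto_const)
  then show ?thesis using assms(2) by (simp add: prob_compl)
qed

lemma finite_grid_exists:
  fixes R \<delta> :: real
  assumes "\<delta> > 0"
  obtains T where "finite T" "\<And>w. \<bar>w\<bar> \<le> R \<Longrightarrow> \<exists>t\<in>T. w \<le> t \<and> t < w + \<delta>"
proof
  define L where "L = \<lceil>R / \<delta>\<rceil>"
  show "finite ((\<lambda>k. of_int k * \<delta>) ` {-L..L})" by simp
  fix w assume w: "\<bar>w\<bar> \<le> R"
  have "- (R / \<delta>) \<le> w / \<delta>" "w / \<delta> \<le> R / \<delta>"
    using w assms by (simp_all add: divide_right_mono abs_le_iff pos_le_divide_eq pos_divide_le_eq)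
  then have "real_of_int (- L) \<le> of_int \<lceil>w / \<delta>\<rceil>" "\<lceil>w / \<delta>\<rceil> \<le> L"
    unfolding L_def using le_of_int_ceiling[of "R / \<delta>"] le_of_int_ceiling[of "w / \<delta>"]
    by (linarith, simp add: ceiling_mono)
  then have "\<lceil>w / \<delta>\<rceil> \<in> {-L..L}" by (simp only: of_int_le_iff atLeastAtMost_iff)
  moreover have "w \<le> of_int \<lceil>w / \<delta>\<rceil> * \<delta>"
    using le_of_int_ceiling[of "w / \<delta>"] pos_divide_le_eq[OF assms] by blast
  moreover have "of_int \<lceil>w / \<delta>\<rceil> * \<delta> < w + \<delta>"
    using ceiling_correct[of "w / \<delta>"] assms by (simp add: field_simps)
  ultimately show "\<exists>t\<in>(\<lambda>k. of_int k * \<delta>) ` {-L..L}. w \<le> t \<and> t < w + \<delta>" by blast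
qed

lemma gap_straddles_grid_point:
  fixes v w \<delta> R :: real
  assumes grid: "\<And>x. \<bar>x\<bar> \<le> R \<Longrightarrow> \<exists>t\<in>T. x \<le> t \<and> t < x + \<delta>"
    and "\<delta> > 0" and "\<bar>w\<bar> + 2 * \<delta> \<le> R" and "3 * \<delta> < \<bar>v - w\<bar>"
  shows "\<exists>t\<in>T. (v \<le> t \<and> t + \<delta> \<le> w) \<or> (t + \<delta> \<le> v \<and> w \<le> t)"
proof (cases "w < v")
  case True
  obtain t where "t \<in> T" "w \<le> t" "t < w + \<delta>"
    using grid[of w] assms(2,3) by force
  moreover have "t + \<delta> \<le> v" using \<open>t < w + \<delta>\<close> True assms(2,4) by auto
  ultimately show ?thesis by blast
next
  case False
  obtain t where "t \<in> T" "w - 2 * \<delta> \<le> t" "t < w - \<delta>"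
    using grid[of "w - 2 * \<delta>"] assms(2,3) by force
  moreover have "v \<le> t" using \<open>w - 2 * \<delta> \<le> t\<close> False assms(4) by auto
  ultimately show ?thesis by force
qed

lemma (in prob_space) Ghosh_lemma:
  fixes V W :: "nat \<Rightarrow> 'a \<Rightarrow> real"
  assumes [measurable]: "\<And>m. V m \<in> borel_measurable M" "\<And>m. W m \<in> borel_measurable M"
    and tight: "\<And>\<eta>. \<eta> > 0 \<Longrightarrow> \<exists>K. eventually (\<lambda>m. prob {\<omega>\<in>space M. K \<le> \<bar>W m \<omega>\<bar>} < \<eta>) sequentially"
    and below: "\<And>t \<delta>. \<delta> > 0 \<Longrightarrow> (\<lambda>m. prob {\<omega>\<in>space M. V m \<omega> \<le> t \<and> t + \<delta> \<le> W m \<omega>}) \<longlonglongrightarrow> 0"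
    and above: "\<And>t \<delta>. \<delta> > 0 \<Longrightarrow> (\<lambda>m. prob {\<omega>\<in>space M. t + \<delta> \<le> V m \<omega> \<and> W m \<omega> \<le> t}) \<longlonglongrightarrow> 0"
    and "\<epsilon> > 0"
  shows "(\<lambda>m. prob {\<omega>\<in>space M. \<epsilon> < \<bar>V m \<omega> - W m \<omega>\<bar>}) \<longlonglongrightarrow> 0"
proof (rule order_tendstoI)
  fix \<eta> :: real assume "\<eta> > 0"
  define \<delta> where "\<delta> = \<epsilon> / 3"
  have "\<delta> > 0" using \<open>\<epsilon> > 0\<close> by (simp add: \<delta>_def)
  obtain K where K: "eventually (\<lambda>m. prob {\<omega>\<in>space M. K \<le> \<bar>W m \<omega>\<bar>} < \<eta> / 2) sequentially"
    using tight[of "\<eta> / 2"] \<open>\<eta> > 0\<close> by auto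
  obtain T where "finite T" and grid: "\<And>w. \<bar>w\<bar> \<le> \<bar>K\<bar> + 2 * \<delta> \<Longrightarrow> \<exists>t\<in>T. w \<le> t \<and> t < w + \<delta>"
    using finite_grid_exists[OF \<open>\<delta> > 0\<close>] by metis
  define A where "A t m = {\<omega>\<in>space M. V m \<omega> \<le> t \<and> t + \<delta> \<le> W m \<omega>}" for t m
  define B where "B t m = {\<omega>\<in>space M. t + \<delta> \<le> V m \<omega> \<and> W m \<omega> \<le> t}" for t m
  have AB: "A t m \<in> sets M" "B t m \<in> sets M" for t m
    by (simp_all add: A_def B_def)
  have "(\<lambda>m. \<Sum>t\<in>T. prob (A t m) + prob (B t m)) \<longlonglongrightarrow> 0"
    unfolding A_def B_def using below above \<open>\<delta> > 0\<close> by (intro tendsto_null_sum tendsto_add_zero)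
  then have crossings: "eventually (\<lambda>m. (\<Sum>t\<in>T. prob (A t m) + prob (B t m)) < \<eta> / 2) sequentially"
    using \<open>\<eta> > 0\<close> by (intro order_tendstoD) auto
  have cover: "{\<omega>\<in>space M. \<epsilon> < \<bar>V m \<omega> - W m \<omega>\<bar>}
      \<subseteq> {\<omega>\<in>space M. K \<le> \<bar>W m \<omega>\<bar>} \<union> (\<Union>t\<in>T. A t m \<union> B t m)" for m
  proof (intro subsetI)
    fix \<omega> assume \<omega>: "\<omega> \<in> {\<omega>\<in>space M. \<epsilon> < \<bar>V m \<omega> - W m \<omega>\<bar>}"
    show "\<omega> \<in> {\<omega>\<in>space M. K \<le> \<bar>W m \<omega>\<bar>} \<union> (\<Union>t\<in>T. A t m \<union> B t m)"
    proof (cases "K \<le> \<bar>W m \<omega>\<bar>")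
      case False
      then have "\<exists>t\<in>T. (V m \<omega> \<le> t \<and> t + \<delta> \<le> W m \<omega>) \<or> (t + \<delta> \<le> V m \<omega> \<and> W m \<omega> \<le> t)"
        using \<omega> \<open>\<delta> > 0\<close> by (intro gap_straddles_grid_point[OF grid]) (auto simp: \<delta>_def)
      then show ?thesis using \<omega> by (auto simp: A_def B_def)
    qed (use \<omega> in auto)
  qed
  show "eventually (\<lambda>m. prob {\<omega>\<in>space M. \<epsilon> < \<bar>V m \<omega> - W m \<omega>\<bar>} < \<eta>) sequentially"
    using K crossings
  proof eventually_elim
    case (elim m)
    have "prob {\<omega>\<in>space M. \<epsilon> < \<bar>V m \<omega> - W m \<omega>\<bar>}
        \<le> prob ({\<omega>\<in>space M. K \<le> \<bar>W m \<omega>\<bar>} \<union> (\<Union>t\<in>T. A t m \<union> B t m))"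
      using cover \<open>finite T\<close> AB by (intro finite_measure_mono sets.Un sets.finite_UN) auto
    also have "\<dots> \<le> prob {\<omega>\<in>space M. K \<le> \<bar>W m \<omega>\<bar>} + (\<Sum>t\<in>T. prob (A t m \<union> B t m))"
      using \<open>finite T\<close> AB by (intro order_trans[OF measure_Un_le] add_left_mono
          finite_measure_subadditive_finite) auto
    also have "\<dots> \<le> prob {\<omega>\<in>space M. K \<le> \<bar>W m \<omega>\<bar>} + (\<Sum>t\<in>T. prob (A t m) + prob (B t m))"
      using AB by (intro add_left_mono sum_mono measure_Un_le) auto
    finally show ?case using elim by linarith
  qed
qed (simp add: less_le_trans[OF _ measure_nonneg])

section \<open>Chebyshev bounds for pairwise independent counts\<close>

lemma (in prob_space) indep_vars_imp_indep_var:
  assumes "indep_vars (\<lambda>_. borel) X I" "a \<in> I" "b \<in> I" "a \<noteq> b"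
  shows "indep_var borel (X a) borel (X b :: _ \<Rightarrow> real)"
proof -
  have "indep_var (PiM {a} (\<lambda>_. borel)) (\<lambda>\<omega>. restrict (\<lambda>i. X i \<omega>) {a})
                  (PiM {b} (\<lambda>_. borel)) (\<lambda>\<omega>. restrict (\<lambda>i. X i \<omega>) {b})"
    using assms by (intro indep_var_restrict) auto
  then have "indep_var borel ((\<lambda>f. f a) \<circ> (\<lambda>\<omega>. restrict (\<lambda>i. X i \<omega>) {a}))
                  borel ((\<lambda>f. f b) \<circ> (\<lambda>\<omega>. restrict (\<lambda>i. X i \<omega>) {b}))"
    by (rule indep_var_compose) auto
  then show ?thesis by (simp add: o_def)
qed

lemma (in prob_space) expectation_square_sum_pairwise_indep:
  fixes W :: "nat \<Rightarrow> 'a \<Rightarrow> real"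
  assumes [measurable]: "\<And>j. j < N \<Longrightarrow> W j \<in> borel_measurable M"
    and bounded: "\<And>j \<omega>. j < N \<Longrightarrow> \<bar>W j \<omega>\<bar> \<le> B"
    and indep: "\<And>i j. i < N \<Longrightarrow> j < N \<Longrightarrow> i \<noteq> j \<Longrightarrow> indep_var borel (W i) borel (W j)"
    and centered: "\<And>j. j < N \<Longrightarrow> expectation (W j) = 0"
  shows "integrable M (\<lambda>\<omega>. (\<Sum>j<N. W j \<omega>)\<^sup>2)"
    and "expectation (\<lambda>\<omega>. (\<Sum>j<N. W j \<omega>)\<^sup>2) = (\<Sum>j<N. expectation (\<lambda>\<omega>. (W j \<omega>)\<^sup>2))"
proof -
  have integrable: "integrable M (\<lambda>\<omega>. W i \<omega> * W j \<omega>)" if "i < N" "j < N" for i j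
  proof (rule integrable_const_bound[where B="B * B"])
    have "\<bar>W i \<omega>\<bar> * \<bar>W j \<omega>\<bar> \<le> B * B" for \<omega>
      using bounded[OF that(1)] bounded[OF that(2)] by (intro mult_mono) (auto intro: order_trans[OF abs_ge_zero])
    then show "AE \<omega> in M. norm (W i \<omega> * W j \<omega>) \<le> B * B"
      by (simp add: abs_mult)
  qed (use that in simp)
  have "integrable M (W j)" if "j < N" for j
    using that bounded by (intro integrable_const_bound[where B=B]) auto
  then have cross: "expectation (\<lambda>\<omega>. W i \<omega> * W j \<omega>) = 0" if "i < N" "j < N" "i \<noteq> j" for i j
  proof -
    have "expectation (\<lambda>\<omega>. W i \<omega> * W j \<omega>) = expectation (W i) * expectation (W j)"
      using that \<open>\<And>j. j < N \<Longrightarrow> integrable M (W j)\<close> by (intro indep_var_lebesgue_integral indep) auto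
    then show ?thesis using centered that by simp
  qed
  have square: "(\<Sum>j<N. W j \<omega>)\<^sup>2 = (\<Sum>i<N. \<Sum>j<N. W i \<omega> * W j \<omega>)" for \<omega>
    by (simp add: power2_eq_square sum_product)
  show "integrable M (\<lambda>\<omega>. (\<Sum>j<N. W j \<omega>)\<^sup>2)"
    unfolding square using integrable by (auto intro!: Bochner_Integration.integrable_sum)
  have "expectation (\<lambda>\<omega>. (\<Sum>j<N. W j \<omega>)\<^sup>2) = (\<Sum>i<N. \<Sum>j<N. expectation (\<lambda>\<omega>. W i \<omega> * W j \<omega>))"
    unfolding square using integrable by (subst Bochner_Integration.integral_sum)
      (auto intro!: sum.cong Bochner_Integration.integral_sum Bochner_Integration.integrable_sum)
  also have "\<dots> = (\<Sum>i<N. expectation (\<lambda>\<omega>. W i \<omega> * W i \<omega>))"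
    using cross by (intro sum.cong refl) (simp add: sum.remove[of "{..<N}"] sum.neutral)
  finally show "expectation (\<lambda>\<omega>. (\<Sum>j<N. W j \<omega>)\<^sup>2) = (\<Sum>j<N. expectation (\<lambda>\<omega>. (W j \<omega>)\<^sup>2))"
    by (simp add: power2_eq_square)
qed

lemma (in prob_space) Chebyshev_pairwise_indep_sum:
  fixes Z :: "nat \<Rightarrow> 'a \<Rightarrow> real"
  assumes meas [measurable]: "\<And>j. j < N \<Longrightarrow> Z j \<in> borel_measurable M"
    and bounded: "\<And>j \<omega>. j < N \<Longrightarrow> \<bar>Z j \<omega>\<bar> \<le> 1"
    and indep: "\<And>i j. i < N \<Longrightarrow> j < N \<Longrightarrow> i \<noteq> j \<Longrightarrow> indep_var borel (Z i) borel (Z j)"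
    and mean: "\<And>j. j < N \<Longrightarrow> expectation (Z j) = \<mu>"
    and second_moment: "\<And>j. j < N \<Longrightarrow> expectation (\<lambda>\<omega>. (Z j \<omega>)\<^sup>2) \<le> v"
    and "r > 0"
  shows "prob {\<omega>\<in>space M. r \<le> \<bar>(\<Sum>j<N. Z j \<omega>) - N * \<mu>\<bar>} \<le> N * v / r\<^sup>2"
proof -
  define W where "W j = (\<lambda>\<omega>. Z j \<omega> - \<mu>)" for j
  have W_meas: "W j \<in> borel_measurable M" if "j < N" for j
    unfolding W_def using meas[OF that] by (rule borel_measurable_diff) simp
  have W_bounded: "\<bar>W j \<omega>\<bar> \<le> 1 + \<bar>\<mu>\<bar>" if "j < N" for j \<omega>
    using bounded[OF that, of \<omega>] by (simp add: W_def)
  have W_indep: "indep_var borel (W i) borel (W j)" if "i < N" "j < N" "i \<noteq> j" for i j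
    using indep_var_compose[OF indep[OF that], of "\<lambda>x. x - \<mu>" borel "\<lambda>x. x - \<mu>" borel]
    by (simp add: W_def o_def)
  have integrable_Z: "integrable M (Z j)" "integrable M (\<lambda>\<omega>. (Z j \<omega>)\<^sup>2)" if "j < N" for j
    using that bounded by (auto intro!: integrable_const_bound[where B=1] simp: abs_square_le_1)
  have W_centered: "expectation (W j) = 0" if "j < N" for j
    using integrable_Z[OF that] mean[OF that] by (simp add: W_def prob_space)
  have W_square: "expectation (\<lambda>\<omega>. (W j \<omega>)\<^sup>2) \<le> v" if "j < N" for j
  proof -
    have "expectation (\<lambda>\<omega>. (W j \<omega>)\<^sup>2) = expectation (\<lambda>\<omega>. (Z j \<omega>)\<^sup>2 - 2 * \<mu> * Z j \<omega> + \<mu>\<^sup>2)"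
      by (simp add: W_def power2_eq_square algebra_simps)
    also have "\<dots> = expectation (\<lambda>\<omega>. (Z j \<omega>)\<^sup>2) - \<mu>\<^sup>2"
      using integrable_Z[OF that] mean[OF that] by (simp add: prob_space power2_eq_square)
    finally show ?thesis using second_moment[OF that] zero_le_power2[of \<mu>] by linarith
  qed
  note sum_W = expectation_square_sum_pairwise_indep[OF W_meas W_bounded W_indep W_centered]
  have "prob {\<omega>\<in>space M. r \<le> \<bar>\<Sum>j<N. W j \<omega>\<bar>} \<le> expectation (\<lambda>\<omega>. (\<Sum>j<N. W j \<omega>)\<^sup>2) / r\<^sup>2"
    using sum_W(1) W_meas \<open>r > 0\<close> by (intro second_moment_method) auto
  also have "\<dots> = (\<Sum>j<N. expectation (\<lambda>\<omega>. (W j \<omega>)\<^sup>2)) / r\<^sup>2"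
    using sum_W(2) by simp
  also have "\<dots> \<le> N * v / r\<^sup>2"
    using sum_mono[of "{..<N}" "\<lambda>j. expectation (\<lambda>\<omega>. (W j \<omega>)\<^sup>2)" "\<lambda>_. v"] W_square
    by (simp add: divide_right_mono)
  finally show ?thesis by (simp add: W_def sum_subtractf)
qed

lemma (in prob_space) Chebyshev_count:
  fixes Y :: "nat \<Rightarrow> 'a \<Rightarrow> real"
  assumes meas [measurable]: "\<And>j. j < N \<Longrightarrow> Y j \<in> borel_measurable M"
    and indep: "\<And>i j. i < N \<Longrightarrow> j < N \<Longrightarrow> i \<noteq> j \<Longrightarrow> indep_var borel (Y i) borel (Y j)"
    and [measurable]: "A \<in> sets borel"
    and prob_A: "\<And>j. j < N \<Longrightarrow> prob {\<omega>\<in>space M. Y j \<omega> \<in> A} = \<pi>"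
    and "r > 0"
  shows "prob {\<omega>\<in>space M. r \<le> \<bar>(\<Sum>j<N. of_bool (Y j \<omega> \<in> A)) - N * \<pi>\<bar>} \<le> N * \<pi> / r\<^sup>2"
proof -
  define Z where "Z j = (\<lambda>\<omega>. of_bool (Y j \<omega> \<in> A) :: real)" for j
  have Z_meas: "Z j \<in> borel_measurable M" if "j < N" for j
    using meas[OF that] unfolding Z_def by measurable
  have "indep_var borel (Z i) borel (Z j)" if "i < N" "j < N" "i \<noteq> j" for i j
    using indep_var_compose[OF indep[OF that], of "\<lambda>x. of_bool (x \<in> A)" borel "\<lambda>x. of_bool (x \<in> A)" borel]
    by (simp add: Z_def o_def)
  moreover have "expectation (Z j) = \<pi>" if "j < N" for j
  proof -
    have "expectation (Z j) = expectation (indicator {\<omega>\<in>space M. Y j \<omega> \<in> A})"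
      by (intro Bochner_Integration.integral_cong) (auto simp: Z_def indicator_def)
    then show ?thesis using meas[OF that] prob_A[OF that] by simp
  qed
  moreover have "(\<lambda>\<omega>. (Z j \<omega>)\<^sup>2) = Z j" for j
    by (simp add: Z_def fun_eq_iff)
  ultimately show ?thesis
    using Chebyshev_pairwise_indep_sum[of N Z \<pi> \<pi> r] Z_meas \<open>r > 0\<close> by (simp add: Z_def)
qed

section \<open>Distribution functions with a density\<close>

lemma measure_density_Ioc_near_const:
  fixes f :: "real \<Rightarrow> real"
  assumes [measurable]: "(\<lambda>x. ennreal (f x)) \<in> borel_measurable lborel" and nonneg: "\<And>x. f x \<ge> 0"
    and "a < b" and near: "\<And>x. x \<in> {a<..b} \<Longrightarrow> \<bar>f x - c\<bar> \<le> e"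
  shows "\<bar>measure (density lborel (\<lambda>x. ennreal (f x))) {a<..b} - (b - a) * c\<bar> \<le> e * (b - a)"
proof -
  let ?D = "density lborel (\<lambda>x. ennreal (f x))"
  have integral: "emeasure ?D {a<..b} = (\<integral>\<^sup>+ x. ennreal (f x) * indicator {a<..b} x \<partial>lborel)"
    by (simp add: emeasure_density)
  have bounds: "c - e \<le> f x" "f x \<le> c + e" if "x \<in> {a<..b}" for x
    using near[OF that] by auto
  have "0 \<le> c + e" using bounds(2)[of b] nonneg[of b] \<open>a < b\<close> by auto
  have "emeasure ?D {a<..b} \<le> (\<integral>\<^sup>+ x. ennreal (c + e) * indicator {a<..b} x \<partial>lborel)"
    unfolding integral using bounds by (intro nn_integral_mono) (auto simp: indicator_def ennreal_leI)
  also have "\<dots> = ennreal ((c + e) * (b - a))"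
    using \<open>a < b\<close> \<open>0 \<le> c + e\<close> by (subst nn_integral_cmult_indicator) (auto simp: ennreal_mult)
  finally have emeasure_finite: "emeasure ?D {a<..b} \<le> ennreal ((c + e) * (b - a))" .
  then have finite: "emeasure ?D {a<..b} = ennreal (measure ?D {a<..b})"
    by (intro emeasure_eq_ennreal_measure) (auto simp: top_unique)
  have upper: "measure ?D {a<..b} \<le> (c + e) * (b - a)"
    using emeasure_finite \<open>a < b\<close> \<open>0 \<le> c + e\<close> unfolding finite by (simp add: ennreal_le_iff)
  have lower: "(c - e) * (b - a) \<le> measure ?D {a<..b}"
  proof (cases "c - e \<le> 0")
    case True
    then have "(c - e) * (b - a) \<le> 0" using \<open>a < b\<close> by (simp add: mult_nonpos_nonneg)
    then show ?thesis using measure_nonneg order_trans by blast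
  next
    case False
    have "ennreal ((c - e) * (b - a)) = (\<integral>\<^sup>+ x. ennreal (c - e) * indicator {a<..b} x \<partial>lborel)"
      using \<open>a < b\<close> False by (subst nn_integral_cmult_indicator) (auto simp: ennreal_mult)
    also have "\<dots> \<le> emeasure ?D {a<..b}"
      unfolding integral using bounds by (intro nn_integral_mono) (auto simp: indicator_def ennreal_leI)
    finally show ?thesis
      unfolding finite by (simp add: ennreal_le_iff)
  qed
  show ?thesis using upper lower by (simp add: abs_le_iff algebra_simps)
qed

lemma has_real_derivative_measure_density_atMost:
  fixes f :: "real \<Rightarrow> real"
  defines "F \<equiv> \<lambda>x. measure (density lborel (\<lambda>x. ennreal (f x))) {..x}"
  assumes [measurable]: "(\<lambda>x. ennreal (f x)) \<in> borel_measurable lborel" and nonneg: "\<And>x. f x \<ge> 0"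
    and finite: "finite_measure (density lborel (\<lambda>x. ennreal (f x)))" and "isCont f p"
  shows "(F has_real_derivative f p) (at p)"
proof -
  interpret finite_measure "density lborel (\<lambda>x. ennreal (f x))" by (fact finite)
  have slope: "\<bar>(F b - F a) / (b - a) - f p\<bar> \<le> e"
    if "a < b" and near: "\<And>x. x \<in> {a<..b} \<Longrightarrow> \<bar>f x - f p\<bar> \<le> e" for a b e
  proof -
    have "F b = F a + measure (density lborel (\<lambda>x. ennreal (f x))) {a<..b}"
      unfolding F_def using \<open>a < b\<close> by (subst finite_measure_Union[symmetric]) (auto intro: arg_cong2[where f=measure])
    then have "\<bar>(F b - F a) - (b - a) * f p\<bar> \<le> e * (b - a)"
      using measure_density_Ioc_near_const[OF _ nonneg \<open>a < b\<close> near] by simp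
    then show ?thesis using \<open>a < b\<close> by (simp add: field_simps abs_le_iff)
  qed
  show ?thesis unfolding has_field_derivative_iff LIM_eq
  proof (intro allI impI)
    fix r :: real assume "r > 0"
    then obtain \<delta> where "\<delta> > 0" and \<delta>: "\<And>x. dist x p < \<delta> \<Longrightarrow> dist (f x) (f p) < r / 2"
      using \<open>isCont f p\<close> unfolding continuous_at_eps_delta by (metis half_gt_zero)
    have "\<bar>(F x - F p) / (x - p) - f p\<bar> < r" if "x \<noteq> p" "\<bar>x - p\<bar> < \<delta>" for x
    proof -
      have "\<bar>f y - f p\<bar> \<le> r / 2" if "y \<in> {min x p<..max x p}" for y
      proof -
        have "\<bar>y - p\<bar> < \<delta>"
          using that \<open>\<bar>x - p\<bar> < \<delta>\<close> by (auto simp: abs_less_iff min_def max_def split: if_splits)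
        then show ?thesis using \<delta>[of y] by (simp add: dist_real_def)
      qed
      then have "\<bar>(F (max x p) - F (min x p)) / (max x p - min x p) - f p\<bar> \<le> r / 2"
        using \<open>x \<noteq> p\<close> by (intro slope) auto
      moreover have "(F (max x p) - F (min x p)) / (max x p - min x p) = (F x - F p) / (x - p)"
        using minus_divide_divide[of "F x - F p" "x - p"] by (auto simp: max_def min_def)
      ultimately show ?thesis using \<open>r > 0\<close> by simp
    qed
    then show "\<exists>\<delta>>0. \<forall>x. x \<noteq> p \<and> norm (x - p) < \<delta> \<longrightarrow> norm ((F x - F p) / (x - p) - f p) < r"
      using \<open>\<delta> > 0\<close> by auto
  qed
qed

lemma DERIV_scaled_increment_tendsto:
  fixes F :: "real \<Rightarrow> real" and s :: "'b \<Rightarrow> real"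
  assumes "(F has_real_derivative d) (at p)" and s: "filterlim s at_top G"
  shows "((\<lambda>m. s m * (F (p + u / s m) - F p)) \<longlongrightarrow> u * d) G"
proof (cases "u = 0")
  case False
  have s_pos: "eventually (\<lambda>m. 0 < s m) G"
    using s by (simp add: filterlim_at_top_dense)
  have "((\<lambda>m. u / s m) \<longlongrightarrow> 0) G"
    by (rule tendsto_divide_0[OF tendsto_const filterlim_at_top_imp_at_infinity[OF s]])
  moreover have "eventually (\<lambda>m. u / s m \<noteq> 0) G"
    using s_pos by eventually_elim (use False in simp)
  ultimately have "filterlim (\<lambda>m. u / s m) (at 0) G"
    by (simp add: filterlim_at)
  then have "((\<lambda>m. u * ((F (p + u / s m) - F p) / (u / s m))) \<longlongrightarrow> u * d) G"
    by (intro tendsto_mult_left filterlim_compose[OF DERIV_D[OF assms(1)]])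
  moreover have "eventually (\<lambda>m. u * ((F (p + u / s m) - F p) / (u / s m)) = s m * (F (p + u / s m) - F p)) G"
    using s_pos by eventually_elim (use False in simp)
  ultimately show ?thesis by (rule Lim_transform_eventually)
qed simp

lemma (in prob_space) prob_le_distributed:
  fixes X :: "'a \<Rightarrow> real"
  assumes "distributed M lborel X f"
  shows "prob {\<omega>\<in>space M. X \<omega> \<le> x} = measure (density lborel f) {..x}"
proof -
  have "measure (density lborel f) {..x} = measure (distr M lborel X) {..x}"
    using assms by (simp add: distributed_distr_eq_density)
  also have "\<dots> = prob (X -` {..x} \<inter> space M)"
    using distributed_measurable[OF assms] by (intro measure_distr) (simp_all add: atMost_borel)
  finally show ?thesis by (simp add: vimage_def Int_def conj_commute)
qed

lemma (in prob_space) distributed_has_real_derivative_cdf: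
  fixes X :: "'a \<Rightarrow> real"
  assumes "distributed M lborel X (\<lambda>x. ennreal (f x))" and "\<And>x. f x \<ge> 0" and "isCont f p"
  shows "((\<lambda>x. measure (density lborel (\<lambda>x. ennreal (f x))) {..x}) has_real_derivative f p) (at p)"
proof (rule has_real_derivative_measure_density_atMost)
  show "finite_measure (density lborel (\<lambda>x. ennreal (f x)))"
    using prob_space_distr[OF distributed_measurable[OF assms(1)]]
    by (simp add: distributed_distr_eq_density[OF assms(1)] prob_space.finite_measure)
qed (use distributed_borel_measurable[OF assms(1)] assms(2,3) in auto)

lemma measure_std_normal_greaterThan_0: "measure std_normal_distribution {0<..} = 1 / 2"
proof -
  interpret real_distribution std_normal_distribution by (rule real_dist_normal_dist)
  have "emeasure std_normal_distribution {..<0}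
      = (\<integral>\<^sup>+ x. ennreal (std_normal_density (- x)) * indicator {..<0} (- x) \<partial>lborel)"
    using nn_integral_real_affine[of "\<lambda>x. ennreal (std_normal_density x) * indicator {..<0} x" "-1" 0]
    by (simp add: emeasure_density)
  also have "\<dots> = (\<integral>\<^sup>+ x. ennreal (std_normal_density x) * indicator {0<..} x \<partial>lborel)"
    by (intro nn_integral_cong) (simp add: std_normal_density_def indicator_def)
  also have "\<dots> = emeasure std_normal_distribution {0<..}"
    by (simp add: emeasure_density)
  finally have symmetric: "prob {..<0} = prob {0<..}"
    by (simp add: measure_def)
  have "prob {0} = 0"
    by (simp add: measure_def emeasure_density AE_lborel_singleton nn_integral_0_iff_AE)
  moreover have "prob ({..<0} \<union> {0}) = prob {..<0} + prob {0}"
    by (rule finite_measure_Union) auto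
  moreover have "{..<0} \<union> {0} = - {0::real<..}" by auto
  ultimately have "prob {0<..} = 1 - prob {..<0}"
    using prob_compl[of "{0<..}"] by (simp add: Compl_eq_Diff_UNIV)
  then show ?thesis using symmetric by simp
qed

lemma std_normal_upper_quantile_pos:
  assumes "0 < \<beta>" "\<beta> < 1 / 2"
  shows "std_normal_upper_quantile \<beta> > 0"
proof -
  interpret real_distribution std_normal_distribution by (rule real_dist_normal_dist)
  define T where "T z = prob {z<..}" for z
  have T_cdf: "T z = 1 - cdf std_normal_distribution z" for z
    using prob_compl[of "{..z}"] by (simp add: T_def cdf_def Compl_eq_Diff_UNIV[symmetric])
  have cdf_deriv: "(cdf std_normal_distribution has_real_derivative std_normal_density x) (at x)" for x
    unfolding cdf_def using finite_measure
    by (intro has_real_derivative_measure_density_atMost)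
      (auto simp: std_normal_density_def intro!: continuous_intros)
  have "isCont T x" for x
    unfolding T_cdf[abs_def] using DERIV_isCont[OF cdf_deriv] by (intro continuous_intros)
  have T_strict: "T b < T a" if "a < b" for a b
  proof -
    have "cdf std_normal_distribution a < cdf std_normal_distribution b"
      using cdf_deriv normal_density_pos[of 1 0] by (intro DERIV_pos_imp_increasing[OF that] exI conjI) auto
    then show ?thesis by (simp add: T_cdf)
  qed
  have "(T \<longlongrightarrow> 1 - 1) at_top"
    unfolding T_cdf[abs_def] by (intro tendsto_intros cdf_lim_at_top_prob)
  then have "eventually (\<lambda>z. T z < \<beta>) at_top"
    using \<open>\<beta> > 0\<close> by (intro order_tendstoD(2)) auto
  then obtain b where "b \<ge> 0" "T b < \<beta>"
    unfolding eventually_at_top_linorder by (metis max.cobounded1 max.cobounded2)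
  moreover have "T 0 = 1 / 2"
    using measure_std_normal_greaterThan_0 by (simp add: T_def)
  ultimately obtain z where "0 \<le> z" "T z = \<beta>"
    using IVT2[of T b \<beta> 0] \<open>\<And>x. isCont T x\<close> assms by force
  moreover have "z' = z" if "T z' = \<beta>" for z'
    using T_strict[of z' z] T_strict[of z z'] that \<open>T z = \<beta>\<close> by (cases z' z rule: linorder_cases) auto
  ultimately have "std_normal_upper_quantile \<beta> = z"
    unfolding std_normal_upper_quantile_def T_def by blast
  moreover have "z \<noteq> 0" using \<open>T z = \<beta>\<close> \<open>T 0 = 1 / 2\<close> assms by auto
  ultimately show ?thesis using \<open>0 \<le> z\<close> by simp
qed

section \<open>The Bahadur representation\<close>

locale sample_array = prob_space +
  fixes Y :: "nat \<Rightarrow> nat \<Rightarrow> 'a \<Rightarrow> real" and N :: "nat \<Rightarrow> nat" and F :: "real \<Rightarrow> real"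
  assumes measurable_Y: "\<And>m j. j < N m \<Longrightarrow> Y m j \<in> borel_measurable M"
    and indep_Y: "\<And>m i j. i < N m \<Longrightarrow> j < N m \<Longrightarrow> i \<noteq> j \<Longrightarrow> indep_var borel (Y m i) borel (Y m j)"
    and cdf_Y: "\<And>m j x. j < N m \<Longrightarrow> prob {\<omega>\<in>space M. Y m j \<omega> \<le> x} = F x"
    and N_tendsto: "filterlim N at_top sequentially"
begin

abbreviation sample :: "nat \<Rightarrow> 'a \<Rightarrow> real list" where
  "sample m \<omega> \<equiv> map (\<lambda>j. Y m j \<omega>) [0..<N m]"

lemma measurable_count_le_sample [measurable]:
  "(\<lambda>\<omega>. real (count_le x (sample m \<omega>))) \<in> borel_measurable M"
  using measurable_Y by (rule measurable_count_le)

lemma eventually_N_pos: "eventually (\<lambda>m. N m > 0) sequentially"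
  using N_tendsto unfolding filterlim_at_top by (metis (mono_tags) eventually_mono Suc_le_eq)

lemma sqrt_N_tendsto: "filterlim (\<lambda>m. sqrt (N m)) at_top sequentially"
  using filterlim_compose[OF sqrt_at_top filterlim_compose[OF filterlim_real_sequentially N_tendsto]] .

lemma prob_count_le_deviation:
  assumes "r > 0"
  shows "prob {\<omega>\<in>space M. r \<le> \<bar>real (count_le x (sample m \<omega>)) - N m * F x\<bar>} \<le> N m * F x / r\<^sup>2"
  using Chebyshev_count[of "N m" "Y m" "{..x}" "F x" r] measurable_Y indep_Y cdf_Y assms
  by (simp add: count_le_map_upt)

lemma prob_count_Ioc_deviation:
  assumes "a \<le> b" "r > 0"
  shows "prob {\<omega>\<in>space M. r \<le> \<bar>real (count_le b (sample m \<omega>)) - real (count_le a (sample m \<omega>))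
                                  - N m * (F b - F a)\<bar>} \<le> N m * (F b - F a) / r\<^sup>2"
proof -
  have "prob {\<omega>\<in>space M. Y m j \<omega> \<in> {a<..b}} = F b - F a" if "j < N m" for j
  proof -
    have [measurable]: "Y m j \<in> borel_measurable M" using measurable_Y[OF that] .
    have "{\<omega>\<in>space M. Y m j \<omega> \<le> b} = {\<omega>\<in>space M. Y m j \<omega> \<le> a} \<union> {\<omega>\<in>space M. Y m j \<omega> \<in> {a<..b}}"
      using \<open>a \<le> b\<close> by auto
    then have "prob {\<omega>\<in>space M. Y m j \<omega> \<le> b}
        = prob {\<omega>\<in>space M. Y m j \<omega> \<le> a} + prob {\<omega>\<in>space M. Y m j \<omega> \<in> {a<..b}}"
      by (simp only:) (rule finite_measure_Union, auto)
    then show ?thesis using cdf_Y[OF that] by simp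
  qed
  moreover have "real (count_le b (sample m \<omega>)) - real (count_le a (sample m \<omega>))
      = (\<Sum>j<N m. of_bool (Y m j \<omega> \<in> {a<..b}))" for \<omega>
  proof -
    have "of_bool (y \<le> b) - of_bool (y \<le> a) = (of_bool (y \<in> {a<..b}) :: real)" for y
      using \<open>a \<le> b\<close> by auto
    then show ?thesis by (simp only: count_le_map_upt flip: sum_subtractf)
  qed
  ultimately show ?thesis
    using Chebyshev_count[of "N m" "Y m" "{a<..b}" "F b - F a" r] measurable_Y indep_Y \<open>r > 0\<close> by simp
qed

lemma prob_count_increment_deviation:
  assumes "r > 0"
  shows "prob {\<omega>\<in>space M. r \<le> \<bar>real (count_le b (sample m \<omega>)) - real (count_le a (sample m \<omega>))
                                  - N m * (F b - F a)\<bar>} \<le> N m * \<bar>F b - F a\<bar> / r\<^sup>2"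
proof (cases "a \<le> b")
  case True
  have "prob {\<omega>\<in>space M. r \<le> \<bar>real (count_le b (sample m \<omega>)) - real (count_le a (sample m \<omega>))
      - N m * (F b - F a)\<bar>} \<le> N m * (F b - F a) / r\<^sup>2"
    by (rule prob_count_Ioc_deviation[OF True \<open>r > 0\<close>])
  also have "\<dots> \<le> N m * \<bar>F b - F a\<bar> / r\<^sup>2"
    by (intro divide_right_mono mult_left_mono) auto
  finally show ?thesis .
next
  case False
  have "\<bar>real (count_le b (sample m \<omega>)) - real (count_le a (sample m \<omega>)) - N m * (F b - F a)\<bar>
      = \<bar>real (count_le a (sample m \<omega>)) - real (count_le b (sample m \<omega>)) - N m * (F a - F b)\<bar>" for \<omega>
    by (simp add: abs_minus_commute algebra_simps)
  then have "prob {\<omega>\<in>space M. r \<le> \<bar>real (count_le b (sample m \<omega>)) - real (count_le a (sample m \<omega>))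
      - N m * (F b - F a)\<bar>} \<le> N m * (F a - F b) / r\<^sup>2"
    using prob_count_Ioc_deviation[of b a r m] False \<open>r > 0\<close> by simp
  also have "\<dots> \<le> N m * \<bar>F b - F a\<bar> / r\<^sup>2"
    by (intro divide_right_mono mult_left_mono) auto
  finally show ?thesis .
qed

context
  fixes \<phi> p d :: real
  assumes \<phi>: "0 < \<phi>" "\<phi> \<le> 1" and F_p: "F p = \<phi>"
    and F_deriv: "(F has_real_derivative d) (at p)" and "d > 0"
begin

lemma measurable_sample_quantile_sample [measurable]:
  "(\<lambda>\<omega>. sample_quantile \<phi> (sample m \<omega>)) \<in> borel_measurable M"
  using \<phi> measurable_Y by (rule measurable_sample_quantile)

lemma sample_quantile_le_iff_count:
  assumes "N m > 0"
  shows "sample_quantile \<phi> (sample m \<omega>) \<le> x \<longleftrightarrow> N m * \<phi> \<le> count_le x (sample m \<omega>)"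
  using sample_quantile_le_iff[OF \<phi>] assms by (simp add: mult.commute)

lemma count_increment_deviation_tendsto_0:
  assumes "c > 0"
  shows "(\<lambda>m. prob {\<omega>\<in>space M. c * sqrt (N m) \<le> \<bar>real (count_le (p + u / sqrt (N m)) (sample m \<omega>))
            - real (count_le p (sample m \<omega>)) - N m * (F (p + u / sqrt (N m)) - \<phi>)\<bar>}) \<longlonglongrightarrow> 0"
proof -
  define x where "x m = p + u / sqrt (N m)" for m
  define G where "G m y \<omega> = real (count_le y (sample m \<omega>))" for m y \<omega>
  have bound: "prob {\<omega>\<in>space M. c * sqrt (N m) \<le> \<bar>G m (x m) \<omega> - G m p \<omega> - N m * (F (x m) - \<phi>)\<bar>}
      \<le> \<bar>F (x m) - \<phi>\<bar> / c\<^sup>2" if "N m > 0" for m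
  proof -
    have "c * sqrt (N m) > 0" using \<open>c > 0\<close> that by simp
    then have "prob {\<omega>\<in>space M. c * sqrt (N m) \<le> \<bar>G m (x m) \<omega> - G m p \<omega> - N m * (F (x m) - \<phi>)\<bar>}
        \<le> N m * \<bar>F (x m) - \<phi>\<bar> / (c * sqrt (N m))\<^sup>2"
      using prob_count_increment_deviation[of "c * sqrt (N m)" "x m" m p] F_p by (simp add: G_def)
    also have "\<dots> = \<bar>F (x m) - \<phi>\<bar> / c\<^sup>2"
      using that by (simp add: power_mult_distrib)
    finally show ?thesis .
  qed
  have "(\<lambda>m. x m) \<longlonglongrightarrow> p + 0"
    unfolding x_def by (intro tendsto_add tendsto_const tendsto_divide_0[OF tendsto_const]
        filterlim_at_top_imp_at_infinity sqrt_N_tendsto)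
  then have "(\<lambda>m. F (x m)) \<longlonglongrightarrow> \<phi>"
    using isCont_tendsto_compose[OF DERIV_isCont[OF F_deriv]] F_p by simp
  then have "(\<lambda>m. \<bar>F (x m) - \<phi>\<bar> / c\<^sup>2) \<longlonglongrightarrow> \<bar>\<phi> - \<phi>\<bar> / c\<^sup>2"
    using \<open>c > 0\<close> by (intro tendsto_intros) auto
  then have lim: "(\<lambda>m. \<bar>F (x m) - \<phi>\<bar> / c\<^sup>2) \<longlonglongrightarrow> 0"
    by simp
  show ?thesis
    unfolding x_def[symmetric] G_def[symmetric]
    by (rule tendsto_sandwich[OF _ _ tendsto_const lim])
      (use eventually_N_pos bound in \<open>auto elim: eventually_mono\<close>)
qed

lemma count_le_tight:
  assumes "\<eta> > 0"
  shows "\<exists>K. eventually (\<lambda>m. prob {\<omega>\<in>space M.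
           K \<le> \<bar>(N m * \<phi> - count_le p (sample m \<omega>)) / (sqrt (N m) * d)\<bar>} < \<eta>) sequentially"
proof
  define K where "K = \<phi> / (\<eta> * d\<^sup>2) + 1"
  have "K \<ge> 1" "\<phi> < \<eta> * (K * d\<^sup>2)"
    using \<phi> \<open>\<eta> > 0\<close> \<open>d > 0\<close> by (simp_all add: K_def field_simps)
  show "eventually (\<lambda>m. prob {\<omega>\<in>space M.
           K \<le> \<bar>(N m * \<phi> - count_le p (sample m \<omega>)) / (sqrt (N m) * d)\<bar>} < \<eta>) sequentially"
    using eventually_N_pos
  proof eventually_elim
    case (elim m)
    have r: "K * sqrt (N m) * d > 0" using elim \<open>K \<ge> 1\<close> \<open>d > 0\<close> by simp
    have "K \<le> \<bar>(N m * \<phi> - count_le p (sample m \<omega>)) / (sqrt (N m) * d)\<bar>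
        \<longleftrightarrow> K * sqrt (N m) * d \<le> \<bar>real (count_le p (sample m \<omega>)) - N m * \<phi>\<bar>" for \<omega>
      using elim \<open>d > 0\<close> by (simp add: abs_div abs_minus_commute pos_le_divide_eq mult.assoc)
    then have "prob {\<omega>\<in>space M. K \<le> \<bar>(N m * \<phi> - count_le p (sample m \<omega>)) / (sqrt (N m) * d)\<bar>}
        \<le> N m * \<phi> / (K * sqrt (N m) * d)\<^sup>2"
      using prob_count_le_deviation[OF r, of p m] F_p by simp
    also have "\<dots> = \<phi> / (K * (K * d\<^sup>2))"
      using elim by (simp add: power_mult_distrib power2_eq_square field_simps)
    also have "\<dots> \<le> \<phi> / (K * d\<^sup>2)"
    proof (rule divide_left_mono)
      have "0 < K * d\<^sup>2" using \<open>K \<ge> 1\<close> \<open>d > 0\<close> by simp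
      then show "K * d\<^sup>2 \<le> K * (K * d\<^sup>2)" "0 < K * (K * d\<^sup>2) * (K * d\<^sup>2)"
        using \<open>K \<ge> 1\<close> by (simp_all add: mult_le_cancel_right1)
    qed (use \<phi> in simp)
    also have "\<dots> < \<eta>"
      using \<open>\<phi> < \<eta> * (K * d\<^sup>2)\<close> \<open>K \<ge> 1\<close> \<open>d > 0\<close> by (simp add: pos_divide_less_eq)
    finally show ?case .
  qed
qed

lemma prob_crossing_below_tendsto_0:
  assumes "\<delta> > 0"
  shows "(\<lambda>m. prob {\<omega>\<in>space M. sqrt (N m) * (sample_quantile \<phi> (sample m \<omega>) - p) \<le> t
           \<and> t + \<delta> \<le> (N m * \<phi> - count_le p (sample m \<omega>)) / (sqrt (N m) * d)}) \<longlonglongrightarrow> 0"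
proof (rule prob_tendsto_0_subset)
  let ?x = "\<lambda>m. p + t / sqrt (N m)"
  show "(\<lambda>m. prob {\<omega>\<in>space M. \<delta> * d / 2 * sqrt (N m) \<le> \<bar>real (count_le (?x m) (sample m \<omega>))
            - real (count_le p (sample m \<omega>)) - N m * (F (?x m) - \<phi>)\<bar>}) \<longlonglongrightarrow> 0"
    using \<open>\<delta> > 0\<close> \<open>d > 0\<close> by (intro count_increment_deviation_tendsto_0) simp
  have "(\<lambda>m. sqrt (N m) * (F (?x m) - F p)) \<longlonglongrightarrow> t * d"
    by (rule DERIV_scaled_increment_tendsto[OF F_deriv sqrt_N_tendsto])
  then have "eventually (\<lambda>m. sqrt (N m) * (F (?x m) - \<phi>) < t * d + \<delta> * d / 2) sequentially"
    using \<open>\<delta> > 0\<close> \<open>d > 0\<close> F_p by (intro order_tendstoD) auto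
  then show "eventually (\<lambda>m.
      {\<omega>\<in>space M. sqrt (N m) * (sample_quantile \<phi> (sample m \<omega>) - p) \<le> t
         \<and> t + \<delta> \<le> (N m * \<phi> - count_le p (sample m \<omega>)) / (sqrt (N m) * d)}
    \<subseteq> {\<omega>\<in>space M. \<delta> * d / 2 * sqrt (N m) \<le> \<bar>real (count_le (?x m) (sample m \<omega>))
            - real (count_le p (sample m \<omega>)) - N m * (F (?x m) - \<phi>)\<bar>}) sequentially"
    using eventually_N_pos
  proof eventually_elim
    case (elim m)
    define s where "s = sqrt (N m)"
    have s: "s > 0" "N m = s * s" using elim(2) by (simp_all add: s_def)
    show ?case
    proof (intro subsetI CollectI conjI)
      fix \<omega> assume "\<omega> \<in> {\<omega>\<in>space M. sqrt (N m) * (sample_quantile \<phi> (sample m \<omega>) - p) \<le> t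
         \<and> t + \<delta> \<le> (N m * \<phi> - count_le p (sample m \<omega>)) / (sqrt (N m) * d)}"
      then have \<omega>: "\<omega> \<in> space M" "s * (sample_quantile \<phi> (sample m \<omega>) - p) \<le> t"
        "(t + \<delta>) * (s * d) \<le> N m * \<phi> - count_le p (sample m \<omega>)"
        using s(1) \<open>d > 0\<close> by (auto simp flip: s_def simp: pos_le_divide_eq)
      have "sample_quantile \<phi> (sample m \<omega>) - p \<le> t / s"
        using \<omega>(2) s(1) by (simp add: pos_le_divide_eq mult.commute)
      then have "sample_quantile \<phi> (sample m \<omega>) \<le> ?x m"
        by (simp add: s_def)
      then have "N m * \<phi> \<le> count_le (?x m) (sample m \<omega>)"
        using sample_quantile_le_iff_count[OF elim(2)] by simp
      moreover have "s * (s * (F (?x m) - \<phi>)) \<le> s * (t * d + \<delta> * d / 2)"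
        using elim(1) s(1) by (simp flip: s_def)
      ultimately show "\<delta> * d / 2 * sqrt (N m) \<le> \<bar>real (count_le (?x m) (sample m \<omega>))
            - real (count_le p (sample m \<omega>)) - N m * (F (?x m) - \<phi>)\<bar>"
        using \<omega>(3) s(2) unfolding s_def[symmetric] by (simp add: algebra_simps abs_if)
    qed simp
  qed
qed (simp)

lemma prob_crossing_above_tendsto_0:
  assumes "\<delta> > 0"
  shows "(\<lambda>m. prob {\<omega>\<in>space M. t + \<delta> \<le> sqrt (N m) * (sample_quantile \<phi> (sample m \<omega>) - p)
           \<and> (N m * \<phi> - count_le p (sample m \<omega>)) / (sqrt (N m) * d) \<le> t}) \<longlonglongrightarrow> 0"
proof (rule prob_tendsto_0_subset)
  let ?x = "\<lambda>m. p + (t + \<delta> / 2) / sqrt (N m)"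
  show "(\<lambda>m. prob {\<omega>\<in>space M. \<delta> * d / 4 * sqrt (N m) \<le> \<bar>real (count_le (?x m) (sample m \<omega>))
            - real (count_le p (sample m \<omega>)) - N m * (F (?x m) - \<phi>)\<bar>}) \<longlonglongrightarrow> 0"
    using \<open>\<delta> > 0\<close> \<open>d > 0\<close> by (intro count_increment_deviation_tendsto_0) simp
  have "(\<lambda>m. sqrt (N m) * (F (?x m) - F p)) \<longlonglongrightarrow> (t + \<delta> / 2) * d"
    by (rule DERIV_scaled_increment_tendsto[OF F_deriv sqrt_N_tendsto])
  then have "eventually (\<lambda>m. t * d + \<delta> * d / 4 < sqrt (N m) * (F (?x m) - \<phi>)) sequentially"
    using \<open>\<delta> > 0\<close> \<open>d > 0\<close> F_p by (intro order_tendstoD) (auto simp: algebra_simps)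
  then show "eventually (\<lambda>m.
      {\<omega>\<in>space M. t + \<delta> \<le> sqrt (N m) * (sample_quantile \<phi> (sample m \<omega>) - p)
         \<and> (N m * \<phi> - count_le p (sample m \<omega>)) / (sqrt (N m) * d) \<le> t}
    \<subseteq> {\<omega>\<in>space M. \<delta> * d / 4 * sqrt (N m) \<le> \<bar>real (count_le (?x m) (sample m \<omega>))
            - real (count_le p (sample m \<omega>)) - N m * (F (?x m) - \<phi>)\<bar>}) sequentially"
    using eventually_N_pos
  proof eventually_elim
    case (elim m)
    define s where "s = sqrt (N m)"
    have s: "s > 0" "N m = s * s" using elim(2) by (simp_all add: s_def)
    show ?case
    proof (intro subsetI CollectI conjI)
      fix \<omega> assume "\<omega> \<in> {\<omega>\<in>space M. t + \<delta> \<le> sqrt (N m) * (sample_quantile \<phi> (sample m \<omega>) - p)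
         \<and> (N m * \<phi> - count_le p (sample m \<omega>)) / (sqrt (N m) * d) \<le> t}"
      then have \<omega>: "t + \<delta> \<le> s * (sample_quantile \<phi> (sample m \<omega>) - p)"
        "N m * \<phi> - count_le p (sample m \<omega>) \<le> t * (s * d)"
        using s(1) \<open>d > 0\<close> by (auto simp flip: s_def simp: pos_divide_le_eq)
      have "(t + \<delta> / 2) / s < sample_quantile \<phi> (sample m \<omega>) - p"
        using \<omega>(1) s(1) \<open>\<delta> > 0\<close> by (simp add: pos_divide_less_eq mult.commute)
      then have "\<not> sample_quantile \<phi> (sample m \<omega>) \<le> ?x m"
        by (simp add: s_def)
      then have "count_le (?x m) (sample m \<omega>) < N m * \<phi>"
        using sample_quantile_le_iff_count[OF elim(2)] by simp
      moreover have "s * (t * d + \<delta> * d / 4) < s * (s * (F (?x m) - \<phi>))"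
        using elim(1) s(1) by (simp flip: s_def)
      ultimately show "\<delta> * d / 4 * sqrt (N m) \<le> \<bar>real (count_le (?x m) (sample m \<omega>))
            - real (count_le p (sample m \<omega>)) - N m * (F (?x m) - \<phi>)\<bar>"
        using \<omega>(2) s(2) unfolding s_def[symmetric] by (simp add: algebra_simps abs_if)
    qed simp
  qed
qed simp

theorem bahadur_remainder_tendsto_0:
  assumes "\<epsilon> > 0"
  shows "(\<lambda>m. prob {\<omega>\<in>space M. \<epsilon> < \<bar>bahadur_remainder \<phi> p d (sample m \<omega>)\<bar>}) \<longlonglongrightarrow> 0"
proof -
  define V where "V m \<omega> = sqrt (N m) * (sample_quantile \<phi> (sample m \<omega>) - p)" for m \<omega>
  define W where "W m \<omega> = (N m * \<phi> - count_le p (sample m \<omega>)) / (sqrt (N m) * d)" for m \<omega>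
  have [measurable]: "V m \<in> borel_measurable M" "W m \<in> borel_measurable M" for m
    unfolding V_def W_def by measurable
  have "bahadur_remainder \<phi> p d (sample m \<omega>) = V m \<omega> - W m \<omega>" for m \<omega>
    by (simp add: bahadur_remainder_def V_def W_def diff_divide_distrib)
  moreover have "(\<lambda>m. prob {\<omega>\<in>space M. \<epsilon> < \<bar>V m \<omega> - W m \<omega>\<bar>}) \<longlonglongrightarrow> 0"
    using count_le_tight prob_crossing_below_tendsto_0 prob_crossing_above_tendsto_0 \<open>\<epsilon> > 0\<close>
    by (intro Ghosh_lemma) (simp_all add: V_def W_def)
  ultimately show ?thesis by simp
qed

end

end

section \<open>Sliding windows\<close>

lemma concat_map_upt_div_mod:
  "concat (map (\<lambda>i. map (g i) [0..<m]) [0..<n]) = map (\<lambda>j. g (j div m) (j mod m)) [0..<n * m]"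
proof (induction n)
  case (Suc n)
  have "[0..<Suc n * m] = [0..<n * m] @ [n * m..<n * m + m]"
    using upt_add_eq_append[of 0 "n * m" m] by (simp add: add.commute)
  moreover have "map (\<lambda>j. g (j div m) (j mod m)) [n * m..<n * m + m] = map (g n) [0..<m]"
    by (rule nth_equalityI) auto
  ultimately show ?case using Suc by simp
qed simp

lemma (in prob_space) bahadur_remainder_sequence_tendsto_0:
  fixes Y :: "nat \<Rightarrow> 'a \<Rightarrow> real"
  assumes "\<And>j. Y j \<in> borel_measurable M"
    and "\<And>i j. i \<noteq> j \<Longrightarrow> indep_var borel (Y i) borel (Y j)"
    and "\<And>j x. prob {\<omega>\<in>space M. Y j \<omega> \<le> x} = F x"
    and "0 < \<phi>" "\<phi> \<le> 1" "F p = \<phi>" "(F has_real_derivative d) (at p)" "d > 0" "\<epsilon> > 0"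
  shows "(\<lambda>m. prob {\<omega>\<in>space M. \<epsilon> < \<bar>bahadur_remainder \<phi> p d (map (\<lambda>j. Y j \<omega>) [0..<m])\<bar>}) \<longlonglongrightarrow> 0"
proof -
  interpret sample_array M "\<lambda>_. Y" "\<lambda>m. m" F
    using assms(1-3) by unfold_locales (auto intro: filterlim_ident)
  show ?thesis using bahadur_remainder_tendsto_0[OF assms(4-9)] by simp
qed

lemma (in prob_space) bahadur_remainder_window_tendsto_0:
  fixes X :: "nat \<Rightarrow> nat \<Rightarrow> 'a \<Rightarrow> real"
  assumes measurable_X: "\<And>i j. i < n \<Longrightarrow> X i j \<in> borel_measurable M"
    and indep_X: "\<And>i j i' j'. i < n \<Longrightarrow> i' < n \<Longrightarrow> (i, j) \<noteq> (i', j') \<Longrightarrow>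
        indep_var borel (X i j) borel (X i' j')"
    and "\<And>i j x. i < n \<Longrightarrow> prob {\<omega>\<in>space M. X i j \<omega> \<le> x} = F x" and "n \<ge> 1"
    and "0 < \<phi>" "\<phi> \<le> 1" "F p = \<phi>" "(F has_real_derivative d) (at p)" "d > 0" "\<epsilon> > 0"
  shows "(\<lambda>m. prob {\<omega>\<in>space M.
           \<epsilon> < \<bar>bahadur_remainder \<phi> p d (concat (map (\<lambda>i. map (\<lambda>j. X i j \<omega>) [0..<m]) [0..<n]))\<bar>})
         \<longlonglongrightarrow> 0"
proof -
  have div: "j div m < n" if "j < n * m" for j m
    using that by (simp add: less_mult_imp_div_less)
  interpret sample_array M "\<lambda>m j. X (j div m) (j mod m)" "\<lambda>m. n * m" F
  proof
    show "filterlim (\<lambda>m. n * m) at_top sequentially"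
      using \<open>n \<ge> 1\<close> by (intro filterlim_at_top_mono[OF filterlim_ident]) simp_all
    show "indep_var borel (X (i div m) (i mod m)) borel (X (j div m) (j mod m))"
      if "i < n * m" "j < n * m" "i \<noteq> j" for m i j
    proof (rule indep_X)
      show "(i div m, i mod m) \<noteq> (j div m, j mod m)"
        using that(3) by (metis div_mult_mod_eq prod.inject)
    qed (use that div in auto)
  qed (use assms(1,3) div in auto)
  show ?thesis
    using bahadur_remainder_tendsto_0[OF assms(5-10)] by (simp add: concat_map_upt_div_mod)
qed

lemma measurable_window_statistic:
  fixes X :: "nat \<Rightarrow> nat \<Rightarrow> 'a \<Rightarrow> real" and S :: "real list \<Rightarrow> real"
  assumes X: "\<And>i j. i < n \<Longrightarrow> X i j \<in> borel_measurable M"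
    and S: "\<And>Y N. (\<And>j. j < N \<Longrightarrow> Y j \<in> borel_measurable M) \<Longrightarrow>
        (\<lambda>\<omega>. S (map (\<lambda>j. Y j \<omega>) [0..<N])) \<in> borel_measurable M"
  shows "i < n \<Longrightarrow> (\<lambda>\<omega>. S (map (\<lambda>j. X i j \<omega>) [0..<m])) \<in> borel_measurable M"
    and "(\<lambda>\<omega>. S (concat (map (\<lambda>i. map (\<lambda>j. X i j \<omega>) [0..<m]) [0..<n]))) \<in> borel_measurable M"
proof -
  show "(\<lambda>\<omega>. S (map (\<lambda>j. X i j \<omega>) [0..<m])) \<in> borel_measurable M" if "i < n"
    using S[of m "X i"] X that by blast
  show "(\<lambda>\<omega>. S (concat (map (\<lambda>i. map (\<lambda>j. X i j \<omega>) [0..<m]) [0..<n]))) \<in> borel_measurable M"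
    unfolding concat_map_upt_div_mod
    using S[of "n * m" "\<lambda>j. X (j div m) (j mod m)"] X by (simp add: less_mult_imp_div_less)
qed

lemma (in prob_space) prob_mean_quantile_close_tendsto_1:
  fixes X :: "nat \<Rightarrow> nat \<Rightarrow> 'a \<Rightarrow> real"
  assumes measurable_X: "\<And>i j. i < n \<Longrightarrow> X i j \<in> borel_measurable M"
    and indep_X: "\<And>i j i' j'. i < n \<Longrightarrow> i' < n \<Longrightarrow> (i, j) \<noteq> (i', j') \<Longrightarrow>
        indep_var borel (X i j) borel (X i' j')"
    and cdf_X: "\<And>i j x. i < n \<Longrightarrow> prob {\<omega>\<in>space M. X i j \<omega> \<le> x} = F x" and "n \<ge> 1"
    and \<phi>: "0 < \<phi>" "\<phi> \<le> 1" and F: "F p = \<phi>" "(F has_real_derivative d) (at p)" "d > 0"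
    and "c > 0"
  shows "(\<lambda>m. prob {\<omega>\<in>space M.
           \<bar>(\<Sum>i<n. sample_quantile \<phi> (map (\<lambda>j. X i j \<omega>) [0..<m])) / n
            - sample_quantile \<phi> (concat (map (\<lambda>i. map (\<lambda>j. X i j \<omega>) [0..<m]) [0..<n]))\<bar>
           \<le> c / sqrt m}) \<longlonglongrightarrow> 1"
proof -
  note quantile = measurable_window_statistic[where X=X and n=n and M=M and S="sample_quantile \<phi>",
      OF measurable_X measurable_sample_quantile[OF \<phi>]]
  note remainder = measurable_window_statistic[where X=X and n=n and M=M and S="bahadur_remainder \<phi> p d",
      OF measurable_X measurable_bahadur_remainder[OF \<phi>]]
  define Bad where "Bad k m = {\<omega>\<in>space M. c / 2 < \<bar>bahadur_remainder \<phi> p d (if k < n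
      then map (\<lambda>j. X k j \<omega>) [0..<m] else concat (map (\<lambda>i. map (\<lambda>j. X i j \<omega>) [0..<m]) [0..<n]))\<bar>}"
    for k m
  show ?thesis
  proof (rule prob_tendsto_1_if_compl_covered[where I="{..n}" and B=Bad])
    show "(\<lambda>m. prob (Bad k m)) \<longlonglongrightarrow> 0" if "k \<in> {..n}" for k
      using bahadur_remainder_sequence_tendsto_0[OF _ _ _ \<phi> F, where Y="X k" and \<epsilon>="c / 2"]
        bahadur_remainder_window_tendsto_0[OF assms(1-4) \<phi> F, where \<epsilon>="c / 2"]
        measurable_X indep_X cdf_X \<open>c > 0\<close>
      by (cases "k < n") (simp_all add: Bad_def)
    show "Bad k m \<in> sets M" for k m
      using remainder(1)[of k] remainder(2) unfolding Bad_def by (cases "k < n") simp_all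
    show "{\<omega>\<in>space M. \<bar>(\<Sum>i<n. sample_quantile \<phi> (map (\<lambda>j. X i j \<omega>) [0..<m])) / n
        - sample_quantile \<phi> (concat (map (\<lambda>i. map (\<lambda>j. X i j \<omega>) [0..<m]) [0..<n]))\<bar> \<le> c / sqrt m}
      \<in> sets M" for m
    proof -
      have [measurable]: "(\<lambda>\<omega>. \<Sum>i<n. sample_quantile \<phi> (map (\<lambda>j. X i j \<omega>) [0..<m])) \<in> borel_measurable M"
        using quantile(1) by (intro borel_measurable_sum) auto
      have [measurable]: "(\<lambda>\<omega>. sample_quantile \<phi> (concat (map (\<lambda>i. map (\<lambda>j. X i j \<omega>) [0..<m]) [0..<n])))
          \<in> borel_measurable M"
        using quantile(2) .
      show ?thesis by measurable
    qed
    show "eventually (\<lambda>m. space M - {\<omega>\<in>space M.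
        \<bar>(\<Sum>i<n. sample_quantile \<phi> (map (\<lambda>j. X i j \<omega>) [0..<m])) / n
        - sample_quantile \<phi> (concat (map (\<lambda>i. map (\<lambda>j. X i j \<omega>) [0..<m]) [0..<n]))\<bar> \<le> c / sqrt m}
      \<subseteq> (\<Union>k\<in>{..n}. Bad k m)) sequentially"
      using eventually_gt_at_top[of 0]
    proof eventually_elim
      case (elim m)
      have "\<bar>(\<Sum>i<n. sample_quantile \<phi> (map (\<lambda>j. X i j \<omega>) [0..<m])) / n
          - sample_quantile \<phi> (concat (map (\<lambda>i. map (\<lambda>j. X i j \<omega>) [0..<m]) [0..<n]))\<bar> \<le> 2 * (c / 2) / sqrt m"
        if "\<omega> \<in> space M" "\<forall>k\<le>n. \<omega> \<notin> Bad k m" for \<omega>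
      proof (rule mean_sample_quantile_diff_le[where p=p])
        show "\<bar>bahadur_remainder \<phi> p d (map (\<lambda>j. X i j \<omega>) [0..<m])\<bar> \<le> c / 2" if "i < n" for i
          using \<open>\<forall>k\<le>n. \<omega> \<notin> Bad k m\<close>[rule_format, of i] \<open>\<omega> \<in> space M\<close> that
          by (simp add: Bad_def)
        show "\<bar>bahadur_remainder \<phi> p d (concat (map (\<lambda>i. map (\<lambda>j. X i j \<omega>) [0..<m]) [0..<n]))\<bar> \<le> c / 2"
          using \<open>\<forall>k\<le>n. \<omega> \<notin> Bad k m\<close>[rule_format, of n] \<open>\<omega> \<in> space M\<close>
          by (simp add: Bad_def)
      qed (use \<open>n \<ge> 1\<close> \<open>d > 0\<close> elim in auto)
      then show ?case by auto
    qed
  qed simp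
qed

theorem theorem1:
  fixes M :: "'s measure"
    and X :: "nat \<Rightarrow> nat \<Rightarrow> 's \<Rightarrow> real"
    and f :: "real \<Rightarrow> real"
    and n :: nat and \<phi> p \<alpha> :: real
  assumes "prob_space M"
    and "n \<ge> 1"
    and "0 < \<phi>" and "\<phi> < 1"
    and "prob_space.indep_vars M (\<lambda>_. borel) (\<lambda>(i, j). X i j) ({..<n} \<times> UNIV)"
    and "\<And>i j. i < n \<Longrightarrow> distributed M lborel (X i j) (\<lambda>x. ennreal (f x))"
    and "\<And>x. f x \<ge> 0"
    and "isCont f p"
    and "\<And>i j. i < n \<Longrightarrow> measure M {\<omega> \<in> space M. X i j \<omega> \<le> p} = \<phi>"
    and "f p > 0"
    and "0 < \<alpha>" and "\<alpha> < 1"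
  shows "liminf (\<lambda>m. ereal (measure M {\<omega> \<in> space M.
            \<bar>(\<Sum>i<n. sample_quantile \<phi> (map (\<lambda>j. X i j \<omega>) [0..<m])) / real n
             - sample_quantile \<phi> (concat (map (\<lambda>i. map (\<lambda>j. X i j \<omega>) [0..<m]) [0..<n]))\<bar>
            \<le> 2 * std_normal_upper_quantile (\<alpha> / 2) * sqrt (\<phi> * (1 - \<phi>))
               / (sqrt (real n * real m) * f p)}))
         \<ge> ereal (1 - \<alpha>)"
proof -
  interpret prob_space M by fact
  have "0 < n" using assms(2) by simp
  define F where "F x = measure (density lborel (\<lambda>x. ennreal (f x))) {..x}" for x
  define c where "c = 2 * std_normal_upper_quantile (\<alpha> / 2) * sqrt (\<phi> * (1 - \<phi>)) / (sqrt n * f p)"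
  have cdf: "prob {\<omega>\<in>space M. X i j \<omega> \<le> x} = F x" if "i < n" for i j x
    using prob_le_distributed[OF assms(6)[OF that]] by (simp add: F_def)
  have F_deriv: "(F has_real_derivative f p) (at p)"
    unfolding F_def[abs_def] using assms(6)[OF \<open>0 < n\<close>] assms(7,8)
    by (rule distributed_has_real_derivative_cdf)
  have "0 < \<phi> * (1 - \<phi>)" using assms(3,4) by simp
  then have "c > 0"
    using std_normal_upper_quantile_pos[of "\<alpha> / 2"] \<open>0 < n\<close> assms(10-12) by (simp add: c_def)
  then have "(\<lambda>m. prob {\<omega>\<in>space M.
      \<bar>(\<Sum>i<n. sample_quantile \<phi> (map (\<lambda>j. X i j \<omega>) [0..<m])) / n
       - sample_quantile \<phi> (concat (map (\<lambda>i. map (\<lambda>j. X i j \<omega>) [0..<m]) [0..<n]))\<bar> \<le> c / sqrt m}) \<longlonglongrightarrow> 1"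
    using assms(2-4,9,10) cdf cdf[of 0 0 p] F_deriv distributed_measurable[OF assms(6)]
      indep_vars_imp_indep_var[OF assms(5)]
    by (intro prob_mean_quantile_close_tendsto_1[where F=F and p=p and d="f p"]) auto
  then have "liminf (\<lambda>m. ereal (prob {\<omega>\<in>space M.
      \<bar>(\<Sum>i<n. sample_quantile \<phi> (map (\<lambda>j. X i j \<omega>) [0..<m])) / n
       - sample_quantile \<phi> (concat (map (\<lambda>i. map (\<lambda>j. X i j \<omega>) [0..<m]) [0..<n]))\<bar> \<le> c / sqrt m})) = ereal 1"
    by (intro lim_imp_Liminf) auto
  moreover have "c / sqrt m = 2 * std_normal_upper_quantile (\<alpha> / 2) * sqrt (\<phi> * (1 - \<phi>))
      / (sqrt (real n * real m) * f p)" for m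
    by (simp add: c_def real_sqrt_mult)
  ultimately show ?thesis using assms(11) by simp
qed

end
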